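(* Consider the following permutation model $\mathcal V$ (in $\mathsf{ZFA}$ with choice in the ground). Let $A_0$ be an arbitrary infinite set and $G_0$ the group of all permutations of $A_0$. Recursively, let $A_{n+1}=A_n\cup\{(n+1,p,\varepsilon): p\in\bigcup_{k=0}^{n+1}A_n^k,\ \varepsilon\in\{0,1\}\}$, and let $G_{n+1}$ be the group of all permutations $\sigma$ of $A_{n+1}$ for which there exist $\pi_\sigma\in G_n$ and bits $\varepsilon_{\sigma,p}\in\{0,1\}$ (for $p\in\bigcup_{k=0}^{n+1}A_n^k$) with $\sigma(x)=\pi_\sigma(x)$ for $x\in A_n$ and $\sigma((n+1,p,\varepsilon))=(n+1,\pi_\sigma(p),\varepsilon_{\sigma,p}+_2\varepsilon)$, where $\pi_\sigma(\langle p_0,\dots,p_{l-1}\rangle)=\langle\pi_\sigma(p_0),\dots,\pi_\sigma(p_{l-1})\rangle$ and $+_2$ is addition mod 2. Let $A=\bigcup_{n\in\omega}A_n$ be the set of atoms, $G=\{H\in\mathrm{Aut}(A):\forall n\in\omega\ (H\restriction A_n\in G_n)\}$, and let $\mathcal V$ be the class of hereditarily symmetric sets with respect to finite supports. Let $\mathfrak m=|A|$. Then in $\mathcal V$: $$\mathfrak m^2<\mathrm{seq}^{1-1}(\mathfrak m)<[\mathfrak m]^2<\mathrm{fin}(\mathfrak m).$$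
   Context: $\mathrm{Aut}(A)$ is the group of all permutations of $A$. Permutation model: $\pi\in G$ acts on sets by $\pi x=\{\pi y:y\in x\}$; $\mathrm{Fix}_G(E)=\{\pi\in G:\pi a=a\ \forall a\in E\}$; a set $x$ is symmetric if for some finite $E\subseteq A$ (a support), every $\pi\in\mathrm{Fix}_G(E)$ satisfies $\pi x=x$; $\mathcal V$ is the class of hereditarily symmetric sets. For a set $M$: $M^2=M\times M$, $[M]^2$ = 2-element subsets, $\mathrm{seq}^{1-1}(M)$ = finite sequences without repetition, $\mathrm{fin}(M)$ = finite subsets; for $\mathfrak m=|M|$ the corresponding symbols denote cardinalities. $|X|<|Y|$ means an injection $X\to Y$ exists but no bijection. *)

theory Defs
  imports Main
begin

text \<open>Base a is an atom of the initial set A_0;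
  New m p e is the new atom (m, p, e), where p is a finite sequence of earlier atoms
  and e :: bool is a bit (False = 0, True = 1).\<close>
datatype 'a atom = Base 'a | New nat "'a atom list" bool

primrec Alev :: "'a set \<Rightarrow> nat \<Rightarrow> 'a atom set" where
  "Alev A0 0 = Base ` A0"
| "Alev A0 (Suc n) = Alev A0 n \<union>
     {New (Suc n) p e | p e. set p \<subseteq> Alev A0 n \<and> length p \<le> Suc n}"

text \<open>The groups G_n; a permutation of A_n is represented as a function on the
  whole type that is the identity outside A_n. Addition mod 2 of bits is (\<noteq>).\<close>
primrec Glev :: "'a set \<Rightarrow> nat \<Rightarrow> ('a atom \<Rightarrow> 'a atom) set" where
  "Glev A0 0 = {\<sigma>. bij_betw \<sigma> (Alev A0 0) (Alev A0 0) \<and> (\<forall>x. x \<notin> Alev A0 0 \<longrightarrow> \<sigma> x = x)}"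
| "Glev A0 (Suc n) = {\<sigma>. bij_betw \<sigma> (Alev A0 (Suc n)) (Alev A0 (Suc n))
      \<and> (\<forall>x. x \<notin> Alev A0 (Suc n) \<longrightarrow> \<sigma> x = x)
      \<and> (\<exists>\<pi>\<in>Glev A0 n. \<exists>eps :: 'a atom list \<Rightarrow> bool.
            (\<forall>x\<in>Alev A0 n. \<sigma> x = \<pi> x)
          \<and> (\<forall>p e. set p \<subseteq> Alev A0 n \<and> length p \<le> Suc n \<longrightarrow>
                 \<sigma> (New (Suc n) p e) = New (Suc n) (map \<pi> p) (eps p \<noteq> e)))}"

definition Atoms :: "'a set \<Rightarrow> 'a atom set" where
  "Atoms A0 = (\<Union>n. Alev A0 n)"

definition Gperm :: "'a set \<Rightarrow> ('a atom \<Rightarrow> 'a atom) set" where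
  "Gperm A0 = {H. bij_betw H (Atoms A0) (Atoms A0) \<and> (\<forall>x. x \<notin> Atoms A0 \<longrightarrow> H x = x)
      \<and> (\<forall>n. (\<lambda>x. if x \<in> Alev A0 n then H x else x) \<in> Glev A0 n)}"

text \<open>A map f : X \<rightarrow> Y (between sets whose elements are built from atoms, with the
  induced actions actX, actY of permutations) is symmetric, i.e. belongs to the
  model, iff for some finite support E \<subseteq> A every \<pi> \<in> Fix_G(E) satisfies \<pi> f = f,
  i.e. f (\<pi> x) = \<pi> (f x) for x \<in> X.\<close>
definition sym_map ::
  "'a set \<Rightarrow> 'x set \<Rightarrow> (('a atom \<Rightarrow> 'a atom) \<Rightarrow> 'x \<Rightarrow> 'x)
     \<Rightarrow> (('a atom \<Rightarrow> 'a atom) \<Rightarrow> 'y \<Rightarrow> 'y) \<Rightarrow> ('x \<Rightarrow> 'y) \<Rightarrow> bool" where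
  "sym_map A0 X actX actY f \<longleftrightarrow>
     (\<exists>E. finite E \<and> E \<subseteq> Atoms A0 \<and>
        (\<forall>\<pi>\<in>Gperm A0. (\<forall>a\<in>E. \<pi> a = a) \<longrightarrow> (\<forall>x\<in>X. f (actX \<pi> x) = actY \<pi> (f x))))"

definition V_less ::
  "'a set \<Rightarrow> 'x set \<Rightarrow> (('a atom \<Rightarrow> 'a atom) \<Rightarrow> 'x \<Rightarrow> 'x)
     \<Rightarrow> 'y set \<Rightarrow> (('a atom \<Rightarrow> 'a atom) \<Rightarrow> 'y \<Rightarrow> 'y) \<Rightarrow> bool" where
  "V_less A0 X actX Y actY \<longleftrightarrow>
     (\<exists>f. inj_on f X \<and> f ` X \<subseteq> Y \<and> sym_map A0 X actX actY f) \<and>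
     \<not> (\<exists>f. bij_betw f X Y \<and> sym_map A0 X actX actY f)"

definition inj_seqs :: "'a set \<Rightarrow> 'a atom list set" where
  "inj_seqs A0 = {xs. set xs \<subseteq> Atoms A0 \<and> distinct xs}"

definition two_sets :: "'a set \<Rightarrow> 'a atom set set" where
  "two_sets A0 = {s. s \<subseteq> Atoms A0 \<and> card s = 2}"

definition fin_sets :: "'a set \<Rightarrow> 'a atom set set" where
  "fin_sets A0 = {s. s \<subseteq> Atoms A0 \<and> finite s}"

end

theory Submission
  imports Defs "HOL-Combinatorics.Transposition"
begin

text \<open>
  Every permutation f of A_0, together with an arbitrary choice of bits to flip, lifts
  recursively to an element of G. With these lifts one shows that the atoms fixed by
  Fix_G(E), for finite E, are exactly the subterms of the atoms of E together with their
  twins (the atoms differing only in the bit); call this finite set T. A symmetric bijection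
  A^2 -> seq^{1-1}(A) with support E would therefore restrict to a bijection between T^2 and
  the injective sequences over T, which are more numerous.

  The injections are s |-> {(n, s, 0), (n, s, 1)}, with a level n determined by s (elements
  of G permute such a pair of twins), and the inclusion [A]^2 -> fin(A). Suppose a symmetric
  bijection sends an injective sequence s to {a, b} (resp. a 2-set y to {a, b, c}), where
  a, b, c are base atoms not occurring in its support. The lift of the transposition (a b)
  (resp. of the 3-cycle (a b c), whose square must fix the 2-set y pointwise) then fixes s
  (resp. y), so a does not occur in s (resp. y). Hence the transposition of a with a further
  fresh atom d fixes s (resp. y) but moves its image.
\<close>

lemma map_eq_self_iff: "map f xs = xs \<longleftrightarrow> (\<forall>x\<in>set xs. f x = x)"
  using map_eq_conv[of f xs id] by simp

lemma card_2_image_eq_imp_involutive: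
  assumes "card y = 2" "g ` y = y" "w \<in> y"
  shows "g (g w) = w"
proof -
  obtain u v where y: "y = {u, v}" using assms(1) by (meson card_2_iff)
  then have "{g u, g v} = {u, v}" using assms(2) by simp
  then have "g u = u \<and> g v = v \<or> g u = v \<and> g v = u" by (simp add: doubleton_eq_iff)
  then show ?thesis using assms(3) y by auto
qed

definition pair_seq :: "'b \<times> 'b \<Rightarrow> 'b list" where
  "pair_seq x = (if fst x = snd x then [fst x] else [fst x, snd x])"

lemma inj_pair_seq: "inj pair_seq"
  by (rule injI) (auto simp: pair_seq_def prod_eq_iff split: if_splits)

lemma set_pair_seq: "set (pair_seq x) = {fst x, snd x}"
  by (auto simp: pair_seq_def)

lemma distinct_pair_seq: "distinct (pair_seq x)"
  by (simp add: pair_seq_def)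

lemma pair_seq_map_prod:
  "inj_on \<pi> {fst x, snd x} \<Longrightarrow> pair_seq (map_prod \<pi> \<pi> x) = map \<pi> (pair_seq x)"
  by (cases x) (auto simp: pair_seq_def inj_on_def)

lemma card_Times_less_card_distinct_lists:
  assumes "finite T"
  shows "card (T \<times> T) < card {xs. set xs \<subseteq> T \<and> distinct xs}"
proof -
  have "insert [] (pair_seq ` (T \<times> T)) \<subseteq> {xs. set xs \<subseteq> T \<and> distinct xs}"
    by (auto simp: set_pair_seq distinct_pair_seq)
  then have "card (insert [] (pair_seq ` (T \<times> T))) \<le> card {xs. set xs \<subseteq> T \<and> distinct xs}"
    using finite_subset_distinct[OF assms] by (rule card_mono[rotated])
  moreover have "[] \<notin> pair_seq ` (T \<times> T)" by (auto simp: pair_seq_def)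
  moreover have "card (pair_seq ` (T \<times> T)) = card (T \<times> T)"
    using inj_on_subset[OF inj_pair_seq subset_UNIV] by (rule card_image)
  ultimately show ?thesis using assms by (simp add: card_insert_disjoint)
qed

lemma inj_equivariant_stable_iff:
  assumes "inj_on f X" "x \<in> X" "act \<pi> x \<in> X" "f (act \<pi> x) = act' \<pi> (f x)"
  shows "act' \<pi> (f x) = f x \<longleftrightarrow> act \<pi> x = x"
proof
  assume "act' \<pi> (f x) = f x"
  then have "f (act \<pi> x) = f x" using assms(4) by simp
  then show "act \<pi> x = x" using assms(1-3) by (blast dest: inj_onD)
next
  assume "act \<pi> x = x"
  have "act' \<pi> (f x) = f (act \<pi> x)" using assms(4) by simp
  also have "\<dots> = f x" using \<open>act \<pi> x = x\<close> by simp
  finally show "act' \<pi> (f x) = f x" .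
qed

lemma bij_betw_fixed_points:
  assumes "bij_betw f X Y"
    and closed: "\<And>\<pi> x. \<pi> \<in> P \<Longrightarrow> x \<in> X \<Longrightarrow> act \<pi> x \<in> X"
    and equivariant: "\<And>\<pi> x. \<pi> \<in> P \<Longrightarrow> x \<in> X \<Longrightarrow> f (act \<pi> x) = act' \<pi> (f x)"
  shows "bij_betw f {x \<in> X. \<forall>\<pi>\<in>P. act \<pi> x = x} {y \<in> Y. \<forall>\<pi>\<in>P. act' \<pi> y = y}"
proof -
  have inj: "inj_on f X" and Y: "Y = f ` X" using assms(1) by (auto simp: bij_betw_def)
  have "act' \<pi> (f x) = f x \<longleftrightarrow> act \<pi> x = x" if "\<pi> \<in> P" "x \<in> X" for \<pi> x
    using inj_equivariant_stable_iff[of f X x act \<pi> act', OF inj that(2) closed[OF that]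
        equivariant[OF that]] .
  then have "(\<forall>\<pi>\<in>P. act' \<pi> (f x) = f x) \<longleftrightarrow> (\<forall>\<pi>\<in>P. act \<pi> x = x)" if "x \<in> X" for x
    using that by blast
  then have "f ` {x \<in> X. \<forall>\<pi>\<in>P. act \<pi> x = x} = {y \<in> Y. \<forall>\<pi>\<in>P. act' \<pi> y = y}"
    unfolding Y by blast
  moreover have "inj_on f {x \<in> X. \<forall>\<pi>\<in>P. act \<pi> x = x}" using inj by (rule inj_on_subset) blast
  ultimately show ?thesis by (simp add: bij_betw_def)
qed


lemma Alev_mono: "m \<le> n \<Longrightarrow> Alev A0 m \<subseteq> Alev A0 n"
  by (induction n) (auto simp: le_Suc_eq)

lemma Alev_subset_Alev_Suc: "Alev A0 n \<subseteq> Alev A0 (Suc n)"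
  by simp

lemma Base_in_Alev_iff [simp]: "Base a \<in> Alev A0 n \<longleftrightarrow> a \<in> A0"
  by (induction n) auto

lemma New_in_Alev_iff:
  "New m p e \<in> Alev A0 n \<longleftrightarrow>
     (\<exists>k. m = Suc k \<and> Suc k \<le> n \<and> set p \<subseteq> Alev A0 k \<and> length p \<le> Suc k)"
  by (induction n) (auto simp: le_Suc_eq)

lemma Alev_subset_Atoms: "Alev A0 n \<subseteq> Atoms A0"
  unfolding Atoms_def by blast

lemma Base_in_Atoms_iff [simp]: "Base a \<in> Atoms A0 \<longleftrightarrow> a \<in> A0"
  by (simp add: Atoms_def)

lemma New_in_Atoms_iff:
  "New m p e \<in> Atoms A0 \<longleftrightarrow> (\<exists>k. m = Suc k \<and> set p \<subseteq> Alev A0 k \<and> length p \<le> Suc k)"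
  by (auto simp: Atoms_def New_in_Alev_iff)

lemma set_subset_Atoms_if_New_in_Atoms: "New m p e \<in> Atoms A0 \<Longrightarrow> set p \<subseteq> Atoms A0"
  using Alev_subset_Atoms by (fastforce simp: New_in_Atoms_iff)

primrec level :: "'a atom \<Rightarrow> nat" where
  "level (Base a) = 0"
| "level (New m p e) = m"

lemma in_Alev_level: "w \<in> Atoms A0 \<Longrightarrow> w \<in> Alev A0 (level w)"
  by (cases w) (auto simp: New_in_Atoms_iff New_in_Alev_iff)


section \<open>Lifting permutations of the base atoms to G\<close>

primrec atom_map :: "('a \<Rightarrow> 'a) \<Rightarrow> (nat \<Rightarrow> 'a atom list \<Rightarrow> bool) \<Rightarrow> 'a atom \<Rightarrow> 'a atom" where
  "atom_map f eps (Base a) = Base (f a)"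
| "atom_map f eps (New m p e) = New m (map (atom_map f eps) p) (eps m p \<noteq> e)"

abbreviation no_flips :: "nat \<Rightarrow> 'a atom list \<Rightarrow> bool" where
  "no_flips \<equiv> \<lambda>_ _. False"

lemma atom_map_in_Alev:
  assumes "f ` A0 \<subseteq> A0"
  shows "w \<in> Alev A0 n \<Longrightarrow> atom_map f eps w \<in> Alev A0 n"
proof (induction w arbitrary: n)
  case (Base a)
  then show ?case using assms by auto
next
  case (New m p e)
  then obtain k where "m = Suc k" "Suc k \<le> n" "set p \<subseteq> Alev A0 k" "length p \<le> Suc k"
    by (auto simp: New_in_Alev_iff)
  then show ?case using New.IH by (auto simp: New_in_Alev_iff)
qed

lemma atom_map_eq_imp_eq:
  assumes "inj_on f A0"
  shows "w \<in> Atoms A0 \<Longrightarrow> v \<in> Atoms A0 \<Longrightarrow> atom_map f eps w = atom_map f eps v \<Longrightarrow> w = v"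
proof (induction w arbitrary: v)
  case (Base a)
  then show ?case using assms by (cases v) (auto dest: inj_onD)
next
  case (New m p e)
  then obtain q e' where v: "v = New m q e'"
    and maps: "map (atom_map f eps) p = map (atom_map f eps) q"
    by (cases v) auto
  have "p = q"
  proof (rule list.inj_map_strong[OF _ maps])
    fix z z' assume "z \<in> set p" "z' \<in> set q" "atom_map f eps z = atom_map f eps z'"
    then show "z = z'"
      using New.IH New.prems(1,2) v set_subset_Atoms_if_New_in_Atoms by blast
  qed
  then show ?case using New.prems(3) v by auto
qed

lemma Alev_subset_image_atom_map:
  assumes "f ` A0 = A0"
  shows "Alev A0 n \<subseteq> atom_map f eps ` Alev A0 n"
proof (induction n)
  case 0
  have "atom_map f eps ` Base ` A0 = Base ` f ` A0" by (simp add: image_image)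
  then show ?case using assms by simp
next
  case (Suc n)
  show ?case
  proof
    fix w assume "w \<in> Alev A0 (Suc n)"
    then consider "w \<in> Alev A0 n"
      | q e where "w = New (Suc n) q e" "set q \<subseteq> Alev A0 n" "length q \<le> Suc n"
      by auto
    then show "w \<in> atom_map f eps ` Alev A0 (Suc n)"
    proof cases
      case 1
      then show ?thesis using Suc.IH Alev_subset_Alev_Suc by blast
    next
      case (2 q e)
      have "q \<in> lists (atom_map f eps ` Alev A0 n)" using 2 Suc.IH by auto
      then obtain p where p: "set p \<subseteq> Alev A0 n" "q = map (atom_map f eps) p"
        by (auto simp: lists_image)
      then have "New (Suc n) p (eps (Suc n) p \<noteq> e) \<in> Alev A0 (Suc n)" using 2 by auto
      moreover have "atom_map f eps (New (Suc n) p (eps (Suc n) p \<noteq> e)) = w"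
        using p(2) 2 by auto
      ultimately show ?thesis by (metis image_eqI)
    qed
  qed
qed

lemma inj_on_atom_map: "inj_on f A0 \<Longrightarrow> inj_on (atom_map f eps) (Atoms A0)"
  by (rule inj_onI) (rule atom_map_eq_imp_eq)

lemma bij_betw_atom_map_Alev:
  assumes "bij_betw f A0 A0"
  shows "bij_betw (atom_map f eps) (Alev A0 n) (Alev A0 n)"
proof -
  have f: "inj_on f A0" "f ` A0 = A0" using assms by (auto simp: bij_betw_def)
  have "inj_on (atom_map f eps) (Alev A0 n)"
    using inj_on_atom_map[OF f(1)] Alev_subset_Atoms by (rule inj_on_subset)
  moreover have "atom_map f eps ` Alev A0 n \<subseteq> Alev A0 n"
    using atom_map_in_Alev[of f] f(2) by blast
  moreover have "Alev A0 n \<subseteq> atom_map f eps ` Alev A0 n"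
    using Alev_subset_image_atom_map[OF f(2)] .
  ultimately show ?thesis by (simp add: bij_betw_def)
qed

lemma bij_betw_atom_map_Atoms:
  assumes "bij_betw f A0 A0"
  shows "bij_betw (atom_map f eps) (Atoms A0) (Atoms A0)"
proof -
  have "inj_on (atom_map f eps) (Atoms A0)"
    using assms by (simp add: bij_betw_def inj_on_atom_map)
  moreover have "atom_map f eps ` Atoms A0 = Atoms A0"
    using bij_betw_atom_map_Alev[OF assms] by (simp add: Atoms_def image_UN bij_betw_def)
  ultimately show ?thesis by (simp add: bij_betw_def)
qed

lemma atom_map_comp:
  "atom_map f no_flips (atom_map g no_flips w) = atom_map (f \<circ> g) no_flips w"
  by (induction w) auto

definition lift_perm ::
  "'a set \<Rightarrow> ('a \<Rightarrow> 'a) \<Rightarrow> (nat \<Rightarrow> 'a atom list \<Rightarrow> bool) \<Rightarrow> 'a atom \<Rightarrow> 'a atom" where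
  "lift_perm A0 f eps x = (if x \<in> Atoms A0 then atom_map f eps x else x)"

lemma lift_perm_apply [simp]: "w \<in> Atoms A0 \<Longrightarrow> lift_perm A0 f eps w = atom_map f eps w"
  by (simp add: lift_perm_def)

lemma restrict_lift_perm_in_Glev:
  assumes "bij_betw f A0 A0"
  shows "(\<lambda>x. if x \<in> Alev A0 n then lift_perm A0 f eps x else x) \<in> Glev A0 n"
proof -
  define R where "R n x = (if x \<in> Alev A0 n then atom_map f eps x else x)" for n x
  have restrict_eq: "(\<lambda>x. if x \<in> Alev A0 n then lift_perm A0 f eps x else x) = R n" for n
    using Alev_subset_Atoms[of A0 n] by (auto simp: R_def fun_eq_iff)
  have bij: "bij_betw (R n) (Alev A0 n) (Alev A0 n)" for n
    using bij_betw_atom_map_Alev[OF assms]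
    by (rule bij_betw_cong[THEN iffD1, rotated]) (simp add: R_def)
  have id_outside: "\<forall>x. x \<notin> Alev A0 n \<longrightarrow> R n x = x" for n
    by (simp add: R_def)
  have "R n \<in> Glev A0 n"
  proof (induction n)
    case 0
    show ?case using bij[of 0] id_outside[of 0] by (simp only: Glev.simps mem_Collect_eq)
  next
    case (Suc n)
    have "\<forall>x\<in>Alev A0 n. R (Suc n) x = R n x"
      using Alev_subset_Alev_Suc by (auto simp: R_def)
    moreover have "R (Suc n) (New (Suc n) p e) = New (Suc n) (map (R n) p) (eps (Suc n) p \<noteq> e)"
      if "set p \<subseteq> Alev A0 n" "length p \<le> Suc n" for p e
      using that by (auto simp: R_def subset_iff)
    ultimately show ?case
      using Suc.IH bij[of "Suc n"] id_outside[of "Suc n"]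
      by (simp only: Glev.simps mem_Collect_eq) blast
  qed
  then show ?thesis unfolding restrict_eq .
qed

lemma lift_perm_in_Gperm:
  assumes "bij_betw f A0 A0"
  shows "lift_perm A0 f eps \<in> Gperm A0"
proof -
  have "bij_betw (lift_perm A0 f eps) (Atoms A0) (Atoms A0)"
    using bij_betw_atom_map_Atoms[OF assms] by (rule bij_betw_cong[THEN iffD1, rotated]) simp
  then show ?thesis
    using restrict_lift_perm_in_Glev[OF assms] by (simp add: Gperm_def lift_perm_def)
qed


lemma Gperm_bij_betw: "\<pi> \<in> Gperm A0 \<Longrightarrow> bij_betw \<pi> (Atoms A0) (Atoms A0)"
  by (simp add: Gperm_def)

lemma Gperm_in_Atoms: "\<pi> \<in> Gperm A0 \<Longrightarrow> w \<in> Atoms A0 \<Longrightarrow> \<pi> w \<in> Atoms A0"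
  using Gperm_bij_betw bij_betwE by blast

lemma Gperm_inj_on: "\<pi> \<in> Gperm A0 \<Longrightarrow> inj_on \<pi> (Atoms A0)"
  using Gperm_bij_betw bij_betw_def by blast

lemma Gperm_restrict_in_Glev:
  "\<pi> \<in> Gperm A0 \<Longrightarrow> (\<lambda>x. if x \<in> Alev A0 n then \<pi> x else x) \<in> Glev A0 n"
  by (simp add: Gperm_def)

lemma Gperm_in_Alev:
  assumes "\<pi> \<in> Gperm A0" "w \<in> Alev A0 n"
  shows "\<pi> w \<in> Alev A0 n"
proof -
  have "bij_betw (\<lambda>x. if x \<in> Alev A0 n then \<pi> x else x) (Alev A0 n) (Alev A0 n)"
    using Gperm_restrict_in_Glev[OF assms(1), of n] by (cases n) auto
  then show ?thesis using assms(2) bij_betwE by fastforce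
qed

lemma Gperm_New:
  assumes "\<pi> \<in> Gperm A0" "New m p e \<in> Atoms A0"
  obtains b where "\<And>e'. \<pi> (New m p e') = New m (map \<pi> p) (b \<noteq> e')"
proof -
  obtain k where k: "m = Suc k" "set p \<subseteq> Alev A0 k" "length p \<le> Suc k"
    using assms(2) by (auto simp: New_in_Atoms_iff)
  let ?R = "\<lambda>x. if x \<in> Alev A0 (Suc k) then \<pi> x else x"
  have "?R \<in> Glev A0 (Suc k)" using Gperm_restrict_in_Glev[OF assms(1)] .
  then obtain \<rho> eps where \<rho>: "\<forall>x\<in>Alev A0 k. ?R x = \<rho> x"
    and New: "\<forall>p e. set p \<subseteq> Alev A0 k \<and> length p \<le> Suc k \<longrightarrow>
                 ?R (New (Suc k) p e) = New (Suc k) (map \<rho> p) (eps p \<noteq> e)"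
    by (simp only: Glev.simps mem_Collect_eq) blast
  have "map \<rho> p = map \<pi> p"
    using \<rho> k(2) Alev_subset_Alev_Suc[of A0 k] by (auto intro!: map_cong)
  moreover have "New (Suc k) p e' \<in> Alev A0 (Suc k)" for e' using k by auto
  ultimately have "\<pi> (New m p e') = New m (map \<pi> p) (eps p \<noteq> e')" for e'
    using New k by simp
  then show thesis by (rule that)
qed

lemma level_Gperm:
  assumes "\<pi> \<in> Gperm A0" "w \<in> Atoms A0"
  shows "level (\<pi> w) = level w"
proof (cases w)
  case (Base a)
  have "\<pi> w \<in> Alev A0 (level w)" using Gperm_in_Alev[OF assms(1) in_Alev_level[OF assms(2)]] .
  then show ?thesis using Base by auto
next
  case (New m p e)
  then show ?thesis using Gperm_New[OF assms(1)] assms(2) by (metis level.simps(2))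
qed

lemma map_Gperm_in_inj_seqs:
  assumes "\<pi> \<in> Gperm A0" "xs \<in> inj_seqs A0"
  shows "map \<pi> xs \<in> inj_seqs A0"
proof -
  have xs: "set xs \<subseteq> Atoms A0" "distinct xs" using assms(2) by (simp_all add: inj_seqs_def)
  then have "inj_on \<pi> (set xs)" using Gperm_inj_on[OF assms(1)] inj_on_subset by blast
  then show ?thesis using xs Gperm_in_Atoms[OF assms(1)] by (auto simp: inj_seqs_def distinct_map)
qed

lemma image_Gperm_in_two_sets:
  assumes "\<pi> \<in> Gperm A0" "s \<in> two_sets A0"
  shows "\<pi> ` s \<in> two_sets A0"
proof -
  have s: "s \<subseteq> Atoms A0" "card s = 2" using assms(2) by (simp_all add: two_sets_def)
  then have "inj_on \<pi> s" using Gperm_inj_on[OF assms(1)] inj_on_subset by blast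
  then show ?thesis using s Gperm_in_Atoms[OF assms(1)] by (auto simp: two_sets_def card_image)
qed


section \<open>Atoms fixed by the stabilizer of a finite support\<close>

text \<open>Twins are included because, by Gperm_New, an element of G fixing an atom also fixes
  its twin.\<close>
primrec subatoms :: "'a atom \<Rightarrow> 'a atom set" where
  "subatoms (Base a) = {Base a}"
| "subatoms (New m p e) = insert (New m p e) (insert (New m p (\<not> e)) (\<Union> (set (map subatoms p))))"

definition leaves :: "'a atom \<Rightarrow> 'a set" where
  "leaves w = {a. Base a \<in> subatoms w}"

definition subatom_closure :: "'a atom set \<Rightarrow> 'a atom set" where
  "subatom_closure E = (\<Union>z\<in>E. subatoms z)"

definition Fix :: "'a set \<Rightarrow> 'a atom set \<Rightarrow> ('a atom \<Rightarrow> 'a atom) set" where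
  "Fix A0 E = {\<pi> \<in> Gperm A0. \<forall>a\<in>E. \<pi> a = a}"

lemma Fix_mono: "E \<subseteq> E' \<Longrightarrow> Fix A0 E' \<subseteq> Fix A0 E"
  by (auto simp: Fix_def)

lemma finite_subatoms: "finite (subatoms w)"
  by (induction w) auto

lemma finite_leaves: "finite (leaves w)"
proof -
  have "leaves w = Base -` subatoms w" by (auto simp: leaves_def)
  moreover have "inj Base" by (simp add: inj_def)
  ultimately show ?thesis by (metis finite_vimageI finite_subatoms)
qed

lemma subatoms_flip: "New m p e \<in> subatoms w \<Longrightarrow> New m p (\<not> e) \<in> subatoms w"
  by (induction w) auto

lemma subatoms_subset_Alev: "w \<in> Alev A0 n \<Longrightarrow> subatoms w \<subseteq> Alev A0 n"
proof (induction w arbitrary: n)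
  case (Base a)
  then show ?case by simp
next
  case (New m p e)
  then obtain k where k: "m = Suc k" "Suc k \<le> n" "set p \<subseteq> Alev A0 k" "length p \<le> Suc k"
    by (auto simp: New_in_Alev_iff)
  then have "set p \<subseteq> Alev A0 n" using Alev_mono[of k n] by auto
  moreover have "New m p (\<not> e) \<in> Alev A0 n" using k by (auto simp: New_in_Alev_iff)
  ultimately show ?case using New by auto
qed

lemma finite_subatom_closure: "finite E \<Longrightarrow> finite (subatom_closure E)"
  by (simp add: subatom_closure_def finite_subatoms)

lemma subatom_closure_subset_Atoms: "E \<subseteq> Atoms A0 \<Longrightarrow> subatom_closure E \<subseteq> Atoms A0"
  using subatoms_subset_Alev Alev_subset_Atoms by (fastforce simp: subatom_closure_def Atoms_def)

lemma Gperm_fixes_subatoms: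
  assumes "\<pi> \<in> Gperm A0"
  shows "z \<in> Atoms A0 \<Longrightarrow> \<pi> z = z \<Longrightarrow> w \<in> subatoms z \<Longrightarrow> \<pi> w = w"
proof (induction z)
  case (Base a)
  then show ?case by simp
next
  case (New m p e)
  obtain b where b: "\<And>e'. \<pi> (New m p e') = New m (map \<pi> p) (b \<noteq> e')"
    using Gperm_New[OF assms New.prems(1)] by blast
  have fixed_p: "map \<pi> p = p" and "\<not> b" using New.prems(2) b[of e] by auto
  then have "\<pi> (New m p (\<not> e)) = New m p (\<not> e)" using b by simp
  moreover have "\<pi> w = w" if "z \<in> set p" "w \<in> subatoms z" for z
    using New.IH[OF that(1) _ _ that(2)] set_subset_Atoms_if_New_in_Atoms[OF New.prems(1)]
      fixed_p that(1) by (auto simp: map_eq_self_iff)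
  ultimately show ?case using New.prems(2,3) by auto
qed

lemma Fix_fixes_subatom_closure:
  "\<pi> \<in> Fix A0 E \<Longrightarrow> E \<subseteq> Atoms A0 \<Longrightarrow> w \<in> subatom_closure E \<Longrightarrow> \<pi> w = w"
  using Gperm_fixes_subatoms by (fastforce simp: Fix_def subatom_closure_def)

lemma atom_map_eq_self:
  assumes "\<forall>a\<in>leaves w. f a = a" "\<forall>m q e. New m q e \<in> subatoms w \<longrightarrow> \<not> eps m q"
  shows "atom_map f eps w = w"
  using assms
proof (induction w)
  case (Base a)
  then show ?case by (simp add: leaves_def)
next
  case (New m p e)
  have "map (atom_map f eps) p = p"
  proof (rule map_idI)
    fix z assume z: "z \<in> set p"
    then have sub: "subatoms z \<subseteq> subatoms (New m p e)" by auto
    then have "\<forall>a\<in>leaves z. f a = a" using New.prems(1) by (auto simp: leaves_def)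
    moreover have "\<forall>m q e. New m q e \<in> subatoms z \<longrightarrow> \<not> eps m q" using New.prems(2) sub by blast
    ultimately show "atom_map f eps z = z" by (rule New.IH[OF z])
  qed
  then show ?case using New.prems(2) by simp
qed

lemma fixed_by_atom_map_imp_leaves_fixed:
  "atom_map f eps w = w \<Longrightarrow> a \<in> leaves w \<Longrightarrow> f a = a"
proof (induction w)
  case (Base b)
  then show ?case by (simp add: leaves_def)
next
  case (New m p e)
  then obtain z where "z \<in> set p" "a \<in> leaves z" by (auto simp: leaves_def)
  moreover have "map (atom_map f eps) p = p" using New.prems(1) by simp
  ultimately show ?case using New.IH by (auto simp: map_eq_self_iff)
qed

lemma leaves_fixed_by_square_if_lift_perm_stabilizes_card_2:
  assumes "bij_betw f A0 A0" "y \<subseteq> Atoms A0" "card y = 2" "lift_perm A0 f no_flips ` y = y"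
    and "w \<in> y" "a \<in> leaves w"
  shows "f (f a) = a"
proof -
  let ?\<sigma> = "lift_perm A0 f no_flips"
  have "?\<sigma> (?\<sigma> w) = w" using card_2_image_eq_imp_involutive assms(3-5) by metis
  moreover have "w \<in> Atoms A0" "?\<sigma> w \<in> Atoms A0"
    using assms(2,5) Gperm_in_Atoms[OF lift_perm_in_Gperm[OF assms(1)]] by auto
  ultimately have "atom_map (f \<circ> f) no_flips w = w" by (simp add: atom_map_comp)
  then have "(f \<circ> f) a = a" using assms(6) by (rule fixed_by_atom_map_imp_leaves_fixed)
  then show ?thesis by simp
qed

lemma lift_perm_in_Fix:
  assumes "bij_betw f A0 A0" "E \<subseteq> Atoms A0" "\<forall>z\<in>E. \<forall>a\<in>leaves z. f a = a"
  shows "lift_perm A0 f no_flips \<in> Fix A0 E"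
proof -
  have "lift_perm A0 f no_flips z = z" if "z \<in> E" for z
    using that assms(2,3) atom_map_eq_self[of z f no_flips] by auto
  then show ?thesis using lift_perm_in_Gperm[OF assms(1)] by (simp add: Fix_def)
qed

lemma obtain_fresh:
  assumes "infinite A0" "finite F"
  obtains a where "a \<in> A0" "a \<notin> F"
  using Diff_infinite_finite[OF assms(2,1)] infinite_imp_nonempty by blast

lemma obtain_fresh_transposition_in_Fix:
  assumes "infinite A0" "a \<in> A0" "finite F" "finite Z" "Z \<subseteq> Atoms A0" "\<forall>z\<in>Z. a \<notin> leaves z"
  obtains d where "d \<in> A0" "d \<notin> F" "lift_perm A0 (transpose a d) no_flips \<in> Fix A0 Z"
proof -
  have "finite (F \<union> (\<Union>z\<in>Z. leaves z))" using assms(3,4) finite_leaves by blast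
  then obtain d where d: "d \<in> A0" "d \<notin> F \<union> (\<Union>z\<in>Z. leaves z)" by (rule obtain_fresh[OF assms(1)])
  have "lift_perm A0 (transpose a d) no_flips \<in> Fix A0 Z"
    using d assms(2,5,6) by (intro lift_perm_in_Fix) (auto simp: transpose_def)
  with d that show thesis by blast
qed

lemma fixed_by_Fix_imp_in_subatom_closure:
  assumes "infinite A0" "finite E" "E \<subseteq> Atoms A0" "w \<in> Atoms A0"
    and fixed: "\<forall>\<pi>\<in>Fix A0 E. \<pi> w = w"
  shows "w \<in> subatom_closure E"
proof (rule ccontr)
  assume w: "w \<notin> subatom_closure E"
  show False
  proof (cases w)
    case (Base a)
    then have a: "a \<in> A0" "\<forall>z\<in>E. a \<notin> leaves z"
      using w assms(4) by (auto simp: subatom_closure_def leaves_def)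
    have "finite {a}" by simp
    then obtain d where d: "d \<in> A0" "d \<notin> {a}" "lift_perm A0 (transpose a d) no_flips \<in> Fix A0 E"
      by (rule obtain_fresh_transposition_in_Fix[OF assms(1) a(1) _ assms(2,3) a(2)])
    have "lift_perm A0 (transpose a d) no_flips w = Base d" using Base a(1) by simp
    then show False using fixed d(2,3) Base by auto
  next
    case (New m p e)
    let ?flip = "\<lambda>m' q. m' = m \<and> q = p"
    \<comment> \<open>swaps the twins New m p _, none of which occurs in E\<close>
    have "New m p e' \<notin> subatoms z" if "z \<in> E" for z e'
    proof
      assume "New m p e' \<in> subatoms z"
      then have "New m p e \<in> subatoms z" using subatoms_flip[of m p e' z] by (cases "e' = e") auto
      then show False using w New that by (auto simp: subatom_closure_def)
    qed
    then have "atom_map id ?flip z = z" if "z \<in> E" for z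
      using that by (intro atom_map_eq_self) auto
    then have "lift_perm A0 id ?flip \<in> Fix A0 E"
      using assms(3) lift_perm_in_Gperm[of id A0 ?flip] by (auto simp: Fix_def)
    moreover have "lift_perm A0 id ?flip w \<noteq> w" using New assms(4) by simp
    ultimately show False using fixed by blast
  qed
qed

lemma fixed_by_Fix_iff_in_subatom_closure:
  assumes "infinite A0" "finite E" "E \<subseteq> Atoms A0" "w \<in> Atoms A0"
  shows "(\<forall>\<pi>\<in>Fix A0 E. \<pi> w = w) \<longleftrightarrow> w \<in> subatom_closure E"
  using fixed_by_Fix_imp_in_subatom_closure[OF assms] Fix_fixes_subatom_closure assms(3) by blast


lemma sym_map_iff_Fix:
  "sym_map A0 X actX actY f \<longleftrightarrow>
     (\<exists>E. finite E \<and> E \<subseteq> Atoms A0 \<and> (\<forall>\<pi>\<in>Fix A0 E. \<forall>x\<in>X. f (actX \<pi> x) = actY \<pi> (f x)))"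
  by (auto simp: sym_map_def Fix_def)

lemma V_lessI:
  assumes "inj_on f X" "f ` X \<subseteq> Y"
    and "\<And>\<pi> x. \<pi> \<in> Gperm A0 \<Longrightarrow> x \<in> X \<Longrightarrow> f (actX \<pi> x) = actY \<pi> (f x)"
    and "\<And>g. bij_betw g X Y \<Longrightarrow> \<not> sym_map A0 X actX actY g"
  shows "V_less A0 X actX Y actY"
proof -
  have "sym_map A0 X actX actY f"
    using assms(3) unfolding sym_map_def by (intro exI[of _ "{}"]) auto
  then show ?thesis using assms(1,2,4) unfolding V_less_def by blast
qed


section \<open>The three comparisons\<close>

lemma no_sym_bij_Times_inj_seqs:
  assumes "infinite A0" "bij_betw f (Atoms A0 \<times> Atoms A0) (inj_seqs A0)"
  shows "\<not> sym_map A0 (Atoms A0 \<times> Atoms A0) (\<lambda>\<pi>. map_prod \<pi> \<pi>) (\<lambda>\<pi>. map \<pi>) f"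
proof
  assume "sym_map A0 (Atoms A0 \<times> Atoms A0) (\<lambda>\<pi>. map_prod \<pi> \<pi>) (\<lambda>\<pi>. map \<pi>) f"
  then obtain E where E: "finite E" "E \<subseteq> Atoms A0"
    and equivariant: "\<forall>\<pi>\<in>Fix A0 E. \<forall>x\<in>Atoms A0 \<times> Atoms A0. f (map_prod \<pi> \<pi> x) = map \<pi> (f x)"
    by (auto simp: sym_map_iff_Fix)
  let ?T = "subatom_closure E"
  have T: "?T \<subseteq> Atoms A0" using subatom_closure_subset_Atoms[OF E(2)] .
  have fixed_iff: "(\<forall>\<pi>\<in>Fix A0 E. \<pi> w = w) \<longleftrightarrow> w \<in> ?T" if "w \<in> Atoms A0" for w
    using fixed_by_Fix_iff_in_subatom_closure[OF assms(1) E that] .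
  have "(\<forall>\<pi>\<in>Fix A0 E. map_prod \<pi> \<pi> x = x) \<longleftrightarrow> x \<in> ?T \<times> ?T" if "x \<in> Atoms A0 \<times> Atoms A0" for x
    using that fixed_iff[of "fst x"] fixed_iff[of "snd x"] by (cases x) auto
  then have fixed_pairs: "{x \<in> Atoms A0 \<times> Atoms A0. \<forall>\<pi>\<in>Fix A0 E. map_prod \<pi> \<pi> x = x} = ?T \<times> ?T"
    using T by blast
  have "(\<forall>\<pi>\<in>Fix A0 E. map \<pi> xs = xs) \<longleftrightarrow> set xs \<subseteq> ?T" if "set xs \<subseteq> Atoms A0" for xs
    using that fixed_iff by (auto simp: map_eq_self_iff)
  then have fixed_seqs:
    "{xs \<in> inj_seqs A0. \<forall>\<pi>\<in>Fix A0 E. map \<pi> xs = xs} = {xs. set xs \<subseteq> ?T \<and> distinct xs}"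
    using T by (auto simp: inj_seqs_def)
  have "bij_betw f {x \<in> Atoms A0 \<times> Atoms A0. \<forall>\<pi>\<in>Fix A0 E. map_prod \<pi> \<pi> x = x}
      {xs \<in> inj_seqs A0. \<forall>\<pi>\<in>Fix A0 E. map \<pi> xs = xs}"
    using Gperm_in_Atoms equivariant
    by (intro bij_betw_fixed_points[OF assms(2)]) (auto simp: Fix_def)
  then have "card (?T \<times> ?T) = card {xs. set xs \<subseteq> ?T \<and> distinct xs}"
    unfolding fixed_pairs fixed_seqs by (rule bij_betw_same_card)
  then show False
    using card_Times_less_card_distinct_lists[OF finite_subatom_closure[OF E(1)]] by simp
qed

text \<open>Suc (rank xs) exceeds the length and the levels of the entries of xs, so the twins
  New (Suc (rank xs)) xs _ are atoms.\<close>
definition rank :: "'a atom list \<Rightarrow> nat" where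
  "rank xs = length xs + sum_list (map level xs)"

definition twin_pair :: "'a atom list \<Rightarrow> 'a atom set" where
  "twin_pair xs = {New (Suc (rank xs)) xs False, New (Suc (rank xs)) xs True}"

lemma set_subset_Alev_rank:
  assumes "set xs \<subseteq> Atoms A0"
  shows "set xs \<subseteq> Alev A0 (rank xs)"
proof
  fix w assume w: "w \<in> set xs"
  then have "level w \<le> rank xs" using member_le_sum_list[of "level w" "map level xs"]
    by (simp add: rank_def)
  then show "w \<in> Alev A0 (rank xs)" using in_Alev_level[of w A0] Alev_mono assms w by blast
qed

lemma twin_pair_subset_Atoms: "set xs \<subseteq> Atoms A0 \<Longrightarrow> twin_pair xs \<subseteq> Atoms A0"
  using set_subset_Alev_rank by (auto simp: twin_pair_def New_in_Atoms_iff rank_def)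

lemma twin_pair_in_two_sets: "set xs \<subseteq> Atoms A0 \<Longrightarrow> twin_pair xs \<in> two_sets A0"
  using twin_pair_subset_Atoms by (simp add: two_sets_def twin_pair_def)

lemma inj_twin_pair: "inj twin_pair"
  by (rule injI) (auto simp: twin_pair_def doubleton_eq_iff)

lemma rank_map_Gperm:
  assumes "\<pi> \<in> Gperm A0" "set xs \<subseteq> Atoms A0"
  shows "rank (map \<pi> xs) = rank xs"
proof -
  have "\<forall>x\<in>set xs. level (\<pi> x) = level x" using level_Gperm[OF assms(1)] assms(2) by blast
  then have levels: "map level (map \<pi> xs) = map level xs" by simp
  show ?thesis by (simp only: rank_def length_map levels)
qed

lemma twin_pair_map_Gperm:
  assumes "\<pi> \<in> Gperm A0" "set xs \<subseteq> Atoms A0"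
  shows "twin_pair (map \<pi> xs) = \<pi> ` twin_pair xs"
proof -
  let ?n = "Suc (rank xs)"
  have "New ?n xs e \<in> Atoms A0" for e
    using twin_pair_subset_Atoms[OF assms(2)] by (cases e) (simp_all add: twin_pair_def)
  then obtain b where b: "\<And>e. \<pi> (New ?n xs e) = New ?n (map \<pi> xs) (b \<noteq> e)"
    using Gperm_New[OF assms(1)] by blast
  have "\<pi> ` twin_pair xs = {New ?n (map \<pi> xs) (b \<noteq> False), New ?n (map \<pi> xs) (b \<noteq> True)}"
    by (simp only: twin_pair_def image_insert image_empty b)
  also have "\<dots> = {New ?n (map \<pi> xs) False, New ?n (map \<pi> xs) True}"
    by (cases b) auto
  also have "\<dots> = twin_pair (map \<pi> xs)"
    by (simp add: twin_pair_def rank_map_Gperm[OF assms])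
  finally show ?thesis by (rule sym)
qed

lemma no_sym_bij_inj_seqs_two_sets:
  assumes "infinite A0" "bij_betw f (inj_seqs A0) (two_sets A0)"
  shows "\<not> sym_map A0 (inj_seqs A0) (\<lambda>\<pi>. map \<pi>) (\<lambda>\<pi>. image \<pi>) f"
proof
  assume "sym_map A0 (inj_seqs A0) (\<lambda>\<pi>. map \<pi>) (\<lambda>\<pi>. image \<pi>) f"
  then obtain E where E: "finite E" "E \<subseteq> Atoms A0"
    and equivariant: "\<forall>\<pi>\<in>Fix A0 E. \<forall>xs\<in>inj_seqs A0. f (map \<pi> xs) = \<pi> ` f xs"
    by (auto simp: sym_map_iff_Fix)
  define L where "L = (\<Union>z\<in>E. leaves z)"
  have L: "finite L" using E(1) by (simp add: L_def finite_leaves)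
  obtain a where a: "a \<in> A0" "a \<notin> L" using obtain_fresh[OF assms(1) L] .
  obtain b where b: "b \<in> A0" "b \<notin> insert a L" using obtain_fresh[OF assms(1) finite.insertI[OF L]] .
  let ?y = "{Base a, Base b}"
  have "?y \<in> two_sets A0" using a b by (auto simp: two_sets_def)
  then obtain xs where xs: "xs \<in> inj_seqs A0" "f xs = ?y"
    using bij_betw_imp_surj_on[OF assms(2)] by (metis imageE)
  have xs_Atoms: "set xs \<subseteq> Atoms A0" using xs(1) by (simp add: inj_seqs_def)
  have stable_iff: "\<pi> ` ?y = ?y \<longleftrightarrow> map \<pi> xs = xs" if \<pi>: "\<pi> \<in> Fix A0 E" for \<pi>
  proof -
    have "map \<pi> xs \<in> inj_seqs A0" using \<pi> xs(1) by (simp add: Fix_def map_Gperm_in_inj_seqs)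
    then show ?thesis
      using inj_equivariant_stable_iff[of f "inj_seqs A0" xs "\<lambda>\<pi>. map \<pi>" \<pi> "\<lambda>\<pi>. image \<pi>"]
        bij_betw_imp_inj_on[OF assms(2)] equivariant \<pi> xs
      by simp
  qed
  have "a \<notin> leaves z" if z: "z \<in> set xs" for z
  proof
    assume "a \<in> leaves z"
    let ?\<sigma> = "lift_perm A0 (transpose a b) no_flips"
    have "?\<sigma> \<in> Fix A0 E"
      using a b E(2) by (intro lift_perm_in_Fix) (auto simp: L_def transpose_def)
    moreover have "?\<sigma> ` ?y = ?y" using a(1) b(1) by auto
    ultimately have "map ?\<sigma> xs = xs" by (rule stable_iff[THEN iffD1])
    then have "?\<sigma> z = z" using z by (simp add: map_eq_self_iff)
    then have "atom_map (transpose a b) no_flips z = z" using z xs_Atoms by (simp add: subsetD)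
    then have "transpose a b a = a"
      using \<open>a \<in> leaves z\<close> by (rule fixed_by_atom_map_imp_leaves_fixed)
    then show False using b(2) by simp
  qed
  moreover have "a \<notin> leaves z" if "z \<in> E" for z using that a(2) by (simp add: L_def)
  ultimately have "\<forall>z\<in>E \<union> set xs. a \<notin> leaves z" by blast
  moreover have "finite {a, b}" "finite (E \<union> set xs)" "E \<union> set xs \<subseteq> Atoms A0"
    using E xs_Atoms by auto
  ultimately obtain d where d: "d \<in> A0" "d \<notin> {a, b}"
    and \<tau>: "lift_perm A0 (transpose a d) no_flips \<in> Fix A0 (E \<union> set xs)"
    using obtain_fresh_transposition_in_Fix[OF assms(1) a(1)] by metis
  let ?\<tau> = "lift_perm A0 (transpose a d) no_flips"
  have "?\<tau> \<in> Fix A0 E" using \<tau> Fix_mono[of E "E \<union> set xs" A0] by blast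
  moreover have "map ?\<tau> xs = xs" using \<tau> by (simp add: Fix_def map_eq_self_iff)
  ultimately have "?\<tau> ` ?y = ?y" by (rule stable_iff[THEN iffD2])
  moreover have "?\<tau> ` ?y = {Base d, Base b}" using a(1) b d by auto
  ultimately have "Base a \<in> {Base d, Base b}" by blast
  then show False using b(2) d(2) by auto
qed

lemma no_sym_bij_two_sets_fin_sets:
  assumes "infinite A0" "bij_betw f (two_sets A0) (fin_sets A0)"
  shows "\<not> sym_map A0 (two_sets A0) (\<lambda>\<pi>. image \<pi>) (\<lambda>\<pi>. image \<pi>) f"
proof
  assume "sym_map A0 (two_sets A0) (\<lambda>\<pi>. image \<pi>) (\<lambda>\<pi>. image \<pi>) f"
  then obtain E where E: "finite E" "E \<subseteq> Atoms A0"
    and equivariant: "\<forall>\<pi>\<in>Fix A0 E. \<forall>y\<in>two_sets A0. f (\<pi> ` y) = \<pi> ` f y"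
    by (auto simp: sym_map_iff_Fix)
  define L where "L = (\<Union>z\<in>E. leaves z)"
  have L: "finite L" using E(1) by (simp add: L_def finite_leaves)
  obtain a where a: "a \<in> A0" "a \<notin> L" using obtain_fresh[OF assms(1) L] .
  obtain b where b: "b \<in> A0" "b \<notin> insert a L" using obtain_fresh[OF assms(1) finite.insertI[OF L]] .
  obtain c where c: "c \<in> A0" "c \<notin> insert b (insert a L)"
    using obtain_fresh[OF assms(1) finite.insertI[OF finite.insertI[OF L]]] .
  have distinct: "a \<noteq> b" "b \<noteq> c" "a \<noteq> c" using b(2) c(2) by auto
  let ?x = "{Base a, Base b, Base c}"
  have "?x \<in> fin_sets A0" using a b c by (auto simp: fin_sets_def)
  then obtain y where y: "y \<in> two_sets A0" "f y = ?x"
    using bij_betw_imp_surj_on[OF assms(2)] by (metis imageE)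
  have y_Atoms: "y \<subseteq> Atoms A0" and card_y: "card y = 2" using y(1) by (simp_all add: two_sets_def)
  have stable_iff: "\<pi> ` ?x = ?x \<longleftrightarrow> \<pi> ` y = y" if \<pi>: "\<pi> \<in> Fix A0 E" for \<pi>
  proof -
    have "\<pi> ` y \<in> two_sets A0" using \<pi> y(1) by (simp add: Fix_def image_Gperm_in_two_sets)
    then show ?thesis
      using inj_equivariant_stable_iff[of f "two_sets A0" y "\<lambda>\<pi>. image \<pi>" \<pi> "\<lambda>\<pi>. image \<pi>"]
        bij_betw_imp_inj_on[OF assms(2)] equivariant \<pi> y
      by simp
  qed
  have "a \<notin> leaves w" if w: "w \<in> y" for w
  proof
    assume "a \<in> leaves w"
    let ?c = "transpose a b \<circ> transpose b c"
    let ?\<sigma> = "lift_perm A0 ?c no_flips"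
    have c_bij: "bij_betw ?c A0 A0"
      using a(1) b(1) c(1) by (intro bij_betw_trans[where B = A0]) simp_all
    then have "?\<sigma> \<in> Fix A0 E"
      using a b c E(2) by (intro lift_perm_in_Fix) (auto simp: L_def transpose_def)
    moreover have "?\<sigma> ` ?x = ?x" using a(1) b c by auto
    ultimately have "?\<sigma> ` y = y" by (rule stable_iff[THEN iffD1])
    then have "?c (?c a) = a"
      using leaves_fixed_by_square_if_lift_perm_stabilizes_card_2[OF c_bij y_Atoms card_y]
        w \<open>a \<in> leaves w\<close>
      by blast
    then show False using distinct by simp
  qed
  moreover have "a \<notin> leaves z" if "z \<in> E" for z using that a(2) by (simp add: L_def)
  ultimately have "\<forall>z\<in>E \<union> y. a \<notin> leaves z" by blast
  moreover have "finite {a, b, c}" "finite (E \<union> y)" "E \<union> y \<subseteq> Atoms A0"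
    using E y_Atoms card_y by (auto intro: card_ge_0_finite)
  ultimately obtain d where d: "d \<in> A0" "d \<notin> {a, b, c}"
    and \<tau>: "lift_perm A0 (transpose a d) no_flips \<in> Fix A0 (E \<union> y)"
    using obtain_fresh_transposition_in_Fix[OF assms(1) a(1)] by metis
  let ?\<tau> = "lift_perm A0 (transpose a d) no_flips"
  have "?\<tau> \<in> Fix A0 E" using \<tau> Fix_mono[of E "E \<union> y" A0] by blast
  moreover have "?\<tau> ` y = y" using \<tau> by (auto simp: Fix_def)
  ultimately have "?\<tau> ` ?x = ?x" by (rule stable_iff[THEN iffD2])
  moreover have "?\<tau> ` ?x = {Base d, Base b, Base c}" using a(1) b c d by auto
  ultimately have "Base a \<in> {Base d, Base b, Base c}" by blast
  then show False using distinct d(2) by auto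
qed

theorem mainTheorem9:
  fixes A0 :: "'a set"
  assumes "infinite A0"
  shows "V_less A0 (Atoms A0 \<times> Atoms A0) (\<lambda>\<pi>. map_prod \<pi> \<pi>) (inj_seqs A0) (\<lambda>\<pi>. map \<pi>)
       \<and> V_less A0 (inj_seqs A0) (\<lambda>\<pi>. map \<pi>) (two_sets A0) (\<lambda>\<pi>. image \<pi>)
       \<and> V_less A0 (two_sets A0) (\<lambda>\<pi>. image \<pi>) (fin_sets A0) (\<lambda>\<pi>. image \<pi>)"
proof (intro conjI)
  show "V_less A0 (Atoms A0 \<times> Atoms A0) (\<lambda>\<pi>. map_prod \<pi> \<pi>) (inj_seqs A0) (\<lambda>\<pi>. map \<pi>)"
  proof (rule V_lessI)
    show "inj_on pair_seq (Atoms A0 \<times> Atoms A0)" using inj_pair_seq by (rule inj_on_subset) simp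
    show "pair_seq ` (Atoms A0 \<times> Atoms A0) \<subseteq> inj_seqs A0"
      by (auto simp: inj_seqs_def set_pair_seq distinct_pair_seq)
    show "pair_seq (map_prod \<pi> \<pi> x) = map \<pi> (pair_seq x)"
      if "\<pi> \<in> Gperm A0" "x \<in> Atoms A0 \<times> Atoms A0" for \<pi> x
      using that(2) by (intro pair_seq_map_prod inj_on_subset[OF Gperm_inj_on[OF that(1)]]) auto
  qed (rule no_sym_bij_Times_inj_seqs[OF assms])
  show "V_less A0 (inj_seqs A0) (\<lambda>\<pi>. map \<pi>) (two_sets A0) (\<lambda>\<pi>. image \<pi>)"
  proof (rule V_lessI)
    show "inj_on twin_pair (inj_seqs A0)" using inj_twin_pair by (rule inj_on_subset) simp
    show "twin_pair ` inj_seqs A0 \<subseteq> two_sets A0"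
      using twin_pair_in_two_sets by (auto simp: inj_seqs_def)
    show "twin_pair (map \<pi> xs) = \<pi> ` twin_pair xs" if "\<pi> \<in> Gperm A0" "xs \<in> inj_seqs A0" for \<pi> xs
      using twin_pair_map_Gperm[OF that(1)] that(2) by (simp add: inj_seqs_def)
  qed (rule no_sym_bij_inj_seqs_two_sets[OF assms])
  show "V_less A0 (two_sets A0) (\<lambda>\<pi>. image \<pi>) (fin_sets A0) (\<lambda>\<pi>. image \<pi>)"
  proof (rule V_lessI)
    show "inj_on id (two_sets A0)" by simp
    show "id ` two_sets A0 \<subseteq> fin_sets A0"
      by (auto simp: two_sets_def fin_sets_def intro: card_ge_0_finite)
  qed (simp_all add: no_sym_bij_two_sets_fin_sets[OF assms])
qed

end
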